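(* Let $X$ be a real Hilbert space and $A,B$ nonempty closed convex subsets of $X$, and let $v$ be the displacement vector of $(A,B)$. Suppose there exist $e\in A\cap(B-v)$ and a continuous linear functional $x^*\in X^*$ with $\|x^*\|=1$ such that $$\inf x^*(B-v)=x^*(e)=\sup x^*(A)$$ and such that $x^*$ strongly exposes $A$ at $e$. Then the couple $(A,B)$ is stable.
   Context: $P_C$ is the metric projection onto a closed convex nonempty set $C$; $B_X$ the closed unit ball; $\mathrm{dist}(x,S)=\inf_{s\in S}\|x-s\|$, $\mathrm{dist}(S,T)=\inf_{s\in S}\mathrm{dist}(s,T)$. $v=P_{\overline{B-A}}(0)$. $E=\{a\in A:\mathrm{dist}(a,B)=\mathrm{dist}(A,B)\}$, $F=\{b\in B:\mathrm{dist}(b,A)=\mathrm{dist}(A,B)\}$. A functional $f\in X^*\setminus\{0\}$ strongly exposes $A$ at $a\in A$ if $f(a)=\sup f(A)$ and every sequence $\{x_n\}\subset A$ with $f(x_n)\to\sup f(A)$ converges in norm to $a$. Attouch–Wets convergence: for nonempty closed $C,D$ and $N\in\mathbb N$ let $e_N(C,D)=\sup_{c\in C\cap NB_X}\mathrm{dist}(c,D)$ ($0$ if $C\cap NB_X=\emptyset$), $h_N(C,D)=\max\{e_N(C,D),e_N(D,C)\}$; $C_j\to C$ if $h_N(C_j,C)\to0$ for every $N$. Given sequences $\{A_n\},\{B_n\}$ of closed convex nonempty sets and $a_0\in X$, the perturbed alternating projections sequences are $b_n=P_{B_n}(a_{n-1})$, $a_n=P_{A_n}(b_n)$ ($n\in\mathbb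 N$). The couple $(A,B)$ (with $E,F$ nonempty) is stable if for every choice of sequences $\{A_n\},\{B_n\}$ of closed convex nonempty sets converging in the Attouch–Wets sense to $A$ and $B$ respectively, and every $a_0\in X$, the corresponding perturbed alternating projections sequences $\{a_n\}$ and $\{b_n\}$ converge in norm. *)

theory Defs
  imports "HOL-Analysis.Analysis"
begin

text \<open>Same definition as the library's
closest_point, but without the heine_borel restriction.\<close>
definition metric_proj :: "'a::real_inner set \<Rightarrow> 'a \<Rightarrow> 'a" where
  "metric_proj C x = (SOME y. y \<in> C \<and> (\<forall>z\<in>C. dist x y \<le> dist x z))"

definition displacement :: "'a::real_inner set \<Rightarrow> 'a set \<Rightarrow> 'a" where
  "displacement A B = metric_proj (closure {b - a | a b. a \<in> A \<and> b \<in> B}) 0"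

definition setdist_inf :: "'a::metric_space set \<Rightarrow> 'a set \<Rightarrow> real" where
  "setdist_inf S T = (INF s\<in>S. infdist s T)"

definition best_A :: "'a::metric_space set \<Rightarrow> 'a set \<Rightarrow> 'a set" where
  "best_A A B = {a \<in> A. infdist a B = setdist_inf A B}"

definition best_B :: "'a::metric_space set \<Rightarrow> 'a set \<Rightarrow> 'a set" where
  "best_B A B = {b \<in> B. infdist b A = setdist_inf A B}"

definition strongly_exposes :: "('a::real_normed_vector \<Rightarrow> real) \<Rightarrow> 'a set \<Rightarrow> 'a \<Rightarrow> bool" where
  "strongly_exposes f A a \<longleftrightarrow>
     bounded_linear f \<and> f \<noteq> (\<lambda>x. 0) \<and> a \<in> A \<and> (\<forall>x\<in>A. f x \<le> f a) \<and>
     (\<forall>xs. (\<forall>n. xs n \<in> A) \<longrightarrow> (\<lambda>n. f (xs n)) \<longlonglongrightarrow> f a \<longrightarrow> xs \<longlonglongrightarrow> a)"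

definition aw_excess :: "nat \<Rightarrow> 'a::real_normed_vector set \<Rightarrow> 'a set \<Rightarrow> real" where
  "aw_excess N C D = (if C \<inter> cball 0 (real N) = {} then 0
                      else (SUP c\<in>C \<inter> cball 0 (real N). infdist c D))"

definition aw_dist :: "nat \<Rightarrow> 'a::real_normed_vector set \<Rightarrow> 'a set \<Rightarrow> real" where
  "aw_dist N C D = max (aw_excess N C D) (aw_excess N D C)"

definition aw_converges :: "(nat \<Rightarrow> 'a::real_normed_vector set) \<Rightarrow> 'a set \<Rightarrow> bool" where
  "aw_converges Cs C \<longleftrightarrow> (\<forall>N. (\<lambda>j. aw_dist N (Cs j) C) \<longlonglongrightarrow> 0)"

text \<open>Perturbed alternating projections: a 0 = a0, b (n+1) = P_{B (n+1)} (a n),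
 a (n+1) = P_{A (n+1)} (b (n+1)).  (Indices 0 of the set sequences are unused.)\<close>
primrec alt_a :: "(nat \<Rightarrow> 'a::real_inner set) \<Rightarrow> (nat \<Rightarrow> 'a set) \<Rightarrow> 'a \<Rightarrow> nat \<Rightarrow> 'a" where
  "alt_a As Bs a0 0 = a0"
| "alt_a As Bs a0 (Suc n) = metric_proj (As (Suc n)) (metric_proj (Bs (Suc n)) (alt_a As Bs a0 n))"

definition alt_b :: "(nat \<Rightarrow> 'a::real_inner set) \<Rightarrow> (nat \<Rightarrow> 'a set) \<Rightarrow> 'a \<Rightarrow> nat \<Rightarrow> 'a" where
  "alt_b As Bs a0 n = metric_proj (Bs (Suc n)) (alt_a As Bs a0 n)"
  \<comment> \<open>alt_b As Bs a0 n is b_{n+1}\<close>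

definition stable_couple :: "'a::{real_inner,complete_space} set \<Rightarrow> 'a set \<Rightarrow> bool" where
  "stable_couple A B \<longleftrightarrow>
     best_A A B \<noteq> {} \<and> best_B A B \<noteq> {} \<and>
     (\<forall>As Bs a0. (\<forall>n. closed (As n) \<and> convex (As n) \<and> As n \<noteq> {}) \<longrightarrow>
                 (\<forall>n. closed (Bs n) \<and> convex (Bs n) \<and> Bs n \<noteq> {}) \<longrightarrow>
                 aw_converges As A \<longrightarrow> aw_converges Bs B \<longrightarrow>
                 convergent (alt_a As Bs a0) \<and> convergent (alt_b As Bs a0))"

end

(*
  Write v for the displacement vector and w = e + v, so that P_B e = w and P_A w = e, the functional f
  is maximised on A exactly at e (strongly) and minimised on B at w.  Strong exposure and convexity give,
  for every radius r, a cone inequality  f a + k |a - e| <= f e + k r  on A with some 0 < k <= 1, and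
  both this inequality and  f w <= f b  on B survive, with small losses, the passage to sets A_n, B_n
  that are Attouch-Wets close to A, B; moreover P_{B_n} e -> w and P_{A_n} w -> e.
  For a = a_n, b = P_{B_(n+1)} a and p = P_{B_(n+1)} e, firm nonexpansiveness gives
  |b - p|^2 + |(a - b) - (e - p)|^2 <= |a - e|^2, while the two perturbed inequalities bound the second
  term from below by roughly k |a - e| / 4.  Hence |a_(n+1) - e| <= |b - p| + (small) decreases by a
  fixed amount as long as |a_n - e| >= 24 r and never exceeds 25 r afterwards, so a_n -> e; then
  b_n -> w because P_{B_(n+1)} is nonexpansive.
*)

theory Submission
  imports Defs
begin

section \<open>Metric projection onto closed convex sets\<close>

lemma infdist_less_iff:
  assumes "A \<noteq> {}"
  shows "infdist x A < d \<longleftrightarrow> (\<exists>a\<in>A. dist x a < d)"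
  using assms by (simp add: infdist_notempty cINF_less_iff)

lemma convex_parallelogram_dist_le:
  fixes x :: "'a::real_inner"
  assumes "convex C" "a \<in> C" "b \<in> C" "0 \<le> d" "\<forall>z\<in>C. d \<le> dist x z"
  shows "(norm (a - b))\<^sup>2 \<le> 2 * (dist x a)\<^sup>2 + 2 * (dist x b)\<^sup>2 - 4 * d\<^sup>2"
proof -
  define m where "m = (1/2) *\<^sub>R a + (1/2) *\<^sub>R b"
  have "m \<in> C"
    using assms(1-3) by (simp add: m_def convex_def)
  then have "d\<^sup>2 \<le> (dist x m)\<^sup>2"
    using assms(4,5) by (simp add: power_mono)
  moreover have "(norm (a - b))\<^sup>2 + 4 * (dist x m)\<^sup>2 = 2 * (dist x a)\<^sup>2 + 2 * (dist x b)\<^sup>2"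
    by (simp add: m_def dist_norm power2_norm_eq_inner inner_simps inner_commute algebra_simps)
  ultimately show ?thesis
    by linarith
qed

lemma convex_minimizing_sequence_Cauchy:
  fixes x :: "'a::real_inner"
  assumes "convex C" "0 \<le> d" "\<forall>z\<in>C. d \<le> dist x z"
    and s: "\<And>k. s k \<in> C" "\<And>k. (dist x (s k))\<^sup>2 < d\<^sup>2 + 1 / Suc k"
  shows "Cauchy s"
proof (rule metric_CauchyI)
  fix \<epsilon> :: real
  assume "0 < \<epsilon>"
  obtain N :: nat where "4 / \<epsilon>\<^sup>2 < N"
    using reals_Archimedean2 by blast
  then have N: "4 / Suc N < \<epsilon>\<^sup>2"
    using \<open>0 < \<epsilon>\<close> by (simp add: field_simps) (simp add: add_strict_increasing2)
  have "dist (s m) (s k) < \<epsilon>" if "N \<le> m" "N \<le> k" for m k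
  proof -
    have "1 / Suc m \<le> 1 / Suc N" "1 / Suc k \<le> 1 / Suc N"
      using that by (simp_all add: frac_le)
    then have "(dist (s m) (s k))\<^sup>2 < \<epsilon>\<^sup>2"
      using convex_parallelogram_dist_le[OF assms(1) s(1) s(1) assms(2,3), of m k] s(2)[of m] s(2)[of k] N
      by (simp add: dist_norm)
    then show ?thesis
      using \<open>0 < \<epsilon>\<close> by (simp add: power2_less_imp_less)
  qed
  then show "\<exists>N. \<forall>m\<ge>N. \<forall>k\<ge>N. dist (s m) (s k) < \<epsilon>"
    by blast
qed

lemma closed_convex_nearest_point_exists:
  fixes C :: "'a::{real_inner,complete_space} set"
  assumes "closed C" "convex C" "C \<noteq> {}"
  shows "\<exists>p\<in>C. \<forall>z\<in>C. dist x p \<le> dist x z"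
proof -
  define d where "d = infdist x C"
  have d: "0 \<le> d" "\<forall>z\<in>C. d \<le> dist x z"
    by (simp_all add: d_def infdist_nonneg infdist_le)
  have "\<exists>s\<in>C. (dist x s)\<^sup>2 < d\<^sup>2 + 1 / Suc k" for k
  proof -
    have "d < sqrt (d\<^sup>2 + 1 / Suc k)"
      using d(1) by (intro real_less_rsqrt) simp
    then obtain s where "s \<in> C" "dist x s < sqrt (d\<^sup>2 + 1 / Suc k)"
      using infdist_less_iff[OF assms(3)] by (auto simp: d_def)
    moreover have "(sqrt (d\<^sup>2 + 1 / Suc k))\<^sup>2 = d\<^sup>2 + 1 / Suc k"
      by simp
    ultimately show ?thesis
      by (metis power_strict_mono zero_le_dist zero_less_numeral)
  qed
  then obtain s where s: "\<And>k. s k \<in> C" "\<And>k. (dist x (s k))\<^sup>2 < d\<^sup>2 + 1 / Suc k"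
    by metis
  then obtain p where p: "s \<longlonglongrightarrow> p"
    using convex_minimizing_sequence_Cauchy[OF assms(2) d] Cauchy_convergent_iff convergent_def by blast
  have "p \<in> C"
    using closed_sequentially[OF assms(1)] s(1) p by blast
  have "(\<lambda>k. (dist x (s k))\<^sup>2) \<longlonglongrightarrow> (dist x p)\<^sup>2"
    using p by (intro tendsto_intros)
  moreover have "(\<lambda>k. d\<^sup>2 + 1 / Suc k) \<longlonglongrightarrow> d\<^sup>2"
    using LIMSEQ_inverse_real_of_nat_add[of "d\<^sup>2"] by (simp add: inverse_eq_divide add.commute)
  ultimately have "(dist x p)\<^sup>2 \<le> d\<^sup>2"
    using s(2) by (intro LIMSEQ_le) (auto intro: less_imp_le)
  then have "dist x p \<le> d"
    using d(1) by (rule power2_le_imp_le)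
  then show ?thesis
    using \<open>p \<in> C\<close> d(2) by force
qed

context
  fixes C :: "'a::{real_inner,complete_space} set"
  assumes C: "closed C" "convex C" "C \<noteq> {}"
begin

lemma metric_proj_nearest: "metric_proj C x \<in> C \<and> (\<forall>z\<in>C. dist x (metric_proj C x) \<le> dist x z)"
  unfolding metric_proj_def
  by (rule someI_ex) (use closed_convex_nearest_point_exists[OF C, of x] in blast)

lemma metric_proj_in: "metric_proj C x \<in> C"
  using metric_proj_nearest by blast

lemma metric_proj_le: "z \<in> C \<Longrightarrow> dist x (metric_proj C x) \<le> dist x z"
  using metric_proj_nearest by blast

lemma metric_proj_inner_le:
  assumes "c \<in> C"
  shows "inner (x - metric_proj C x) (c - metric_proj C x) \<le> 0"
proof (rule ccontr)
  define p where "p = metric_proj C x"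
  define w where "w = c - p"
  define s where "s = inner (x - p) w"
  assume "\<not> ?thesis"
  then have "0 < s"
    by (simp add: s_def p_def w_def)
  define t where "t = min 1 (s / ((norm w)\<^sup>2 + 1))"
  have t: "0 < t" "t \<le> 1" "t * (norm w)\<^sup>2 < s"
    using \<open>0 < s\<close> by (auto simp: t_def min_def field_simps add_pos_nonneg)
  have "p + t *\<^sub>R w \<in> C"
    using convexD_alt[OF C(2) metric_proj_in assms, of t] t by (simp add: p_def w_def algebra_simps)
  then have "(norm (x - p))\<^sup>2 \<le> (norm ((x - p) - t *\<^sub>R w))\<^sup>2"
    using metric_proj_le by (simp add: p_def dist_norm diff_diff_eq power_mono)
  also have "\<dots> = (norm (x - p))\<^sup>2 - 2 * t * s + t * (t * (norm w)\<^sup>2)"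
    by (simp add: power2_norm_eq_inner inner_simps inner_commute s_def algebra_simps)
  finally have "2 * s \<le> t * (norm w)\<^sup>2"
    using t(1) by (simp add: algebra_simps)
  then show False
    using t(3) \<open>0 < s\<close> by linarith
qed

lemma metric_proj_pythagoras:
  assumes "c \<in> C"
  shows "(norm (c - metric_proj C x))\<^sup>2 + (norm (x - metric_proj C x))\<^sup>2 \<le> (norm (x - c))\<^sup>2"
proof -
  define p where "p = metric_proj C x"
  have "(norm (x - c))\<^sup>2 = (norm (x - p))\<^sup>2 + (norm (c - p))\<^sup>2 - 2 * inner (x - p) (c - p)"
    by (simp add: power2_norm_eq_inner inner_simps inner_commute)
  then show ?thesis
    using metric_proj_inner_le[OF assms, of x] by (simp add: p_def)
qed

lemma metric_proj_firmly_nonexpansive: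
  "(norm (metric_proj C x - metric_proj C y))\<^sup>2
     + (norm ((x - metric_proj C x) - (y - metric_proj C y)))\<^sup>2 \<le> (norm (x - y))\<^sup>2"
proof -
  define u where "u = metric_proj C x - metric_proj C y"
  define w where "w = (x - metric_proj C x) - (y - metric_proj C y)"
  have "inner (x - metric_proj C x) (metric_proj C y - metric_proj C x) \<le> 0"
       "inner (y - metric_proj C y) (metric_proj C x - metric_proj C y) \<le> 0"
    by (simp_all add: metric_proj_inner_le metric_proj_in)
  then have "0 \<le> inner u w"
    by (simp add: u_def w_def inner_diff inner_commute)
  moreover have "x - y = u + w"
    by (simp add: u_def w_def)
  ultimately show ?thesis
    by (simp add: dot_norm u_def[symmetric] w_def[symmetric])
qed

lemma metric_proj_nonexpansive: "norm (metric_proj C x - metric_proj C y) \<le> norm (x - y)"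
proof -
  have "(norm (metric_proj C x - metric_proj C y))\<^sup>2 \<le> (norm (x - y))\<^sup>2"
    using metric_proj_firmly_nonexpansive[of x y]
      zero_le_power2[of "norm ((x - metric_proj C x) - (y - metric_proj C y))"]
    by linarith
  then show ?thesis
    by (rule power2_le_imp_le) simp
qed

lemma metric_proj_eqI:
  assumes "p \<in> C" "\<forall>z\<in>C. dist x p \<le> dist x z"
  shows "metric_proj C x = p"
proof -
  have "(norm (x - p))\<^sup>2 \<le> (norm (x - metric_proj C x))\<^sup>2"
    using assms metric_proj_in by (simp add: dist_norm power_mono)
  then have "(norm (p - metric_proj C x))\<^sup>2 \<le> 0"
    using metric_proj_pythagoras[OF assms(1), of x] by linarith
  then show ?thesis
    by simp
qed

end

section \<open>Attouch-Wets convergence and projections\<close>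

lemma infdist_le_aw_dist:
  fixes C D :: "'a::real_normed_vector set"
  assumes "x \<in> C" "norm x \<le> real N" "D \<noteq> {}"
  shows "infdist x D \<le> aw_dist N C D" "infdist x D \<le> aw_dist N D C"
proof -
  have "infdist y D \<le> infdist 0 D + real N" if "y \<in> C \<inter> cball 0 (real N)" for y
    using infdist_triangle[of y D 0] that by (simp add: dist_norm)
  then have "bdd_above ((\<lambda>c. infdist c D) ` (C \<inter> cball 0 (real N)))"
    by (intro bdd_aboveI2) blast
  then have "infdist x D \<le> aw_excess N C D"
    using assms by (auto simp: aw_excess_def intro!: cSUP_upper)
  then show "infdist x D \<le> aw_dist N C D" "infdist x D \<le> aw_dist N D C"
    by (simp_all add: aw_dist_def)
qed

lemma aw_converges_infdist_point:
  assumes "aw_converges Cs C" "\<forall>n. Cs n \<noteq> {}" "c \<in> C" "0 < \<epsilon>"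
  shows "eventually (\<lambda>n. infdist c (Cs n) < \<epsilon>) sequentially"
proof -
  define N where "N = nat \<lceil>norm c\<rceil>"
  have "norm c \<le> real N"
    by (simp add: N_def real_nat_ceiling_ge)
  have "eventually (\<lambda>n. aw_dist N (Cs n) C < \<epsilon>) sequentially"
    using assms(1,4) order_tendstoD(2)[of "\<lambda>n. aw_dist N (Cs n) C" 0] by (simp add: aw_converges_def)
  then show ?thesis
  proof eventually_elim
    case (elim n)
    then show ?case
      using infdist_le_aw_dist(2)[OF assms(3) \<open>norm c \<le> real N\<close>, of "Cs n"] assms(2) by fastforce
  qed
qed

lemma aw_converges_infdist_bounded:
  assumes "aw_converges Cs C" "C \<noteq> {}" "0 < \<epsilon>"
  shows "eventually (\<lambda>n. \<forall>x\<in>Cs n. norm x \<le> R \<longrightarrow> infdist x C < \<epsilon>) sequentially"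
proof -
  define N where "N = nat \<lceil>R\<rceil>"
  have "R \<le> real N"
    by (simp add: N_def real_nat_ceiling_ge)
  have "eventually (\<lambda>n. aw_dist N (Cs n) C < \<epsilon>) sequentially"
    using assms(1,3) order_tendstoD(2)[of "\<lambda>n. aw_dist N (Cs n) C" 0] by (simp add: aw_converges_def)
  then show ?thesis
  proof eventually_elim
    case (elim n)
    have "infdist x C \<le> aw_dist N (Cs n) C" if "x \<in> Cs n" "norm x \<le> R" for x
      using infdist_le_aw_dist(1)[OF that(1) order_trans[OF that(2) \<open>R \<le> real N\<close>] assms(2)] .
    then show ?case
      using elim by fastforce
  qed
qed

lemma metric_proj_near_minimizer:
  fixes C :: "'a::{real_inner,complete_space} set"
  assumes C: "closed C" "convex C" "C \<noteq> {}"
    and "z \<in> C" "norm (x - z) \<le> norm (x - metric_proj C x) + \<eta>" "0 \<le> \<eta>"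
  shows "(norm (z - metric_proj C x))\<^sup>2 \<le> \<eta> * (2 * norm (x - metric_proj C x) + \<eta>)"
proof -
  have "(norm (x - z))\<^sup>2 \<le> (norm (x - metric_proj C x) + \<eta>)\<^sup>2"
    using assms(5) by (simp add: power_mono)
  then show ?thesis
    using metric_proj_pythagoras[OF C assms(4), of x] by (simp add: power2_eq_square algebra_simps)
qed

lemma dist_metric_proj_less_of_near:
  fixes C D :: "'a::{real_inner,complete_space} set"
  assumes C: "closed C" "convex C" "C \<noteq> {}" and D: "closed D" "convex D" "D \<noteq> {}"
    and c: "c \<in> D" "dist (metric_proj C x) c < \<epsilon>"
    and near: "\<forall>y\<in>D. norm y \<le> norm x + norm (x - metric_proj C x) + \<epsilon> \<longrightarrow> infdist y C < \<epsilon>"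
  shows "dist (metric_proj D x) (metric_proj C x) < \<epsilon> + sqrt (4 * \<epsilon> * (norm (x - metric_proj C x) + \<epsilon>))"
proof -
  define p where "p = metric_proj C x"
  define d where "d = norm (x - p)"
  define q where "q = metric_proj D x"
  have "0 < \<epsilon>"
    using c(2) zero_le_dist[of "metric_proj C x" c] unfolding p_def by linarith
  have "norm (x - q) \<le> norm (x - c)"
    using metric_proj_le[OF D c(1), of x] by (simp add: q_def dist_norm)
  also have "\<dots> \<le> norm (x - p) + norm (p - c)"
    using norm_triangle_ineq[of "x - p" "p - c"] by simp
  finally have x_q: "norm (x - q) \<le> d + \<epsilon>"
    using c(2) by (simp add: p_def d_def dist_norm)
  then have "norm q \<le> norm x + d + \<epsilon>"
    using norm_triangle_ineq4[of x "x - q"] by simp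
  moreover have "q \<in> D"
    using metric_proj_in[OF D] by (simp add: q_def)
  ultimately have "infdist q C < \<epsilon>"
    using near by (simp add: p_def d_def)
  then obtain z where z: "z \<in> C" "dist q z < \<epsilon>"
    using infdist_less_iff[OF C(3)] by blast
  have "norm (x - z) \<le> d + 2 * \<epsilon>"
    using norm_triangle_ineq[of "x - q" "q - z"] x_q z(2) by (simp add: dist_norm)
  then have "(norm (z - p))\<^sup>2 \<le> 2 * \<epsilon> * (2 * d + 2 * \<epsilon>)"
    using metric_proj_near_minimizer[OF C z(1), of x "2 * \<epsilon>"] \<open>0 < \<epsilon>\<close> by (simp add: p_def d_def)
  then have "norm (z - p) \<le> sqrt (4 * \<epsilon> * (d + \<epsilon>))"
    by (intro real_le_rsqrt) (simp add: algebra_simps)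
  then show ?thesis
    using z(2) dist_triangle[of q p z] unfolding p_def d_def q_def dist_norm by linarith
qed

lemma metric_proj_aw_tendsto:
  fixes C :: "'a::{real_inner,complete_space} set"
  assumes aw: "aw_converges Cs C" and C: "closed C" "convex C" "C \<noteq> {}"
    and Cs: "\<forall>n. closed (Cs n) \<and> convex (Cs n) \<and> Cs n \<noteq> {}"
  shows "(\<lambda>n. metric_proj (Cs n) x) \<longlonglongrightarrow> metric_proj C x"
proof (rule tendstoI)
  fix \<delta> :: real
  assume "0 < \<delta>"
  define p where "p = metric_proj C x"
  define d where "d = norm (x - p)"
  have "((\<lambda>\<epsilon>. \<epsilon> + sqrt (4 * \<epsilon> * (d + \<epsilon>))) \<longlongrightarrow> 0) (at_right 0)"
    by (auto intro!: tendsto_eq_intros)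
  then have "eventually (\<lambda>\<epsilon>. 0 < \<epsilon> \<and> \<epsilon> + sqrt (4 * \<epsilon> * (d + \<epsilon>)) < \<delta>) (at_right 0)"
    using eventually_conj[OF eventually_at_right_less order_tendstoD(2)] \<open>0 < \<delta>\<close> by blast
  then obtain \<epsilon> where \<epsilon>: "0 < \<epsilon>" "\<epsilon> + sqrt (4 * \<epsilon> * (d + \<epsilon>)) < \<delta>"
    using eventually_happens by force
  have "eventually (\<lambda>n. infdist p (Cs n) < \<epsilon>) sequentially"
    using aw_converges_infdist_point[OF aw _ metric_proj_in[OF C] \<epsilon>(1)] Cs by (simp add: p_def)
  moreover have "eventually (\<lambda>n. \<forall>y\<in>Cs n. norm y \<le> norm x + d + \<epsilon> \<longrightarrow> infdist y C < \<epsilon>) sequentially"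
    using aw_converges_infdist_bounded[OF aw C(3) \<epsilon>(1)] .
  ultimately show "eventually (\<lambda>n. dist (metric_proj (Cs n) x) (metric_proj C x) < \<delta>) sequentially"
  proof eventually_elim
    case (elim n)
    have Cn: "closed (Cs n)" "convex (Cs n)" "Cs n \<noteq> {}"
      using Cs by auto
    obtain c where "c \<in> Cs n" "dist p c < \<epsilon>"
      using elim(1) infdist_less_iff[OF Cn(3)] by blast
    then show ?case
      using dist_metric_proj_less_of_near[OF C Cn, of c x \<epsilon>] elim(2) \<epsilon>(2)
      unfolding p_def d_def by linarith
  qed
qed

section \<open>Cone inequalities\<close>

lemma convex_point_at_distance:
  fixes K :: "'a::real_normed_vector set"
  assumes "convex K" "p \<in> K" "x \<in> K" "0 < \<rho>" "\<rho> \<le> norm (x - p)"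
  obtains y where "y \<in> K" "norm (y - p) = \<rho>" "x - p = (norm (x - p) / \<rho>) *\<^sub>R (y - p)"
proof
  define t where "t = \<rho> / norm (x - p)"
  have "0 < norm (x - p)"
    using assms(4,5) by linarith
  then have t: "0 < t" "t \<le> 1"
    using assms(4,5) by (auto simp: t_def)
  show "(1 - t) *\<^sub>R p + t *\<^sub>R x \<in> K"
    using convexD_alt[OF assms(1-3)] t by simp
  have y_p: "(1 - t) *\<^sub>R p + t *\<^sub>R x - p = t *\<^sub>R (x - p)"
    by (simp add: algebra_simps)
  then show "norm ((1 - t) *\<^sub>R p + t *\<^sub>R x - p) = \<rho>"
    using \<open>0 < norm (x - p)\<close> assms(4) by (simp add: t_def)
  show "x - p = (norm (x - p) / \<rho>) *\<^sub>R ((1 - t) *\<^sub>R p + t *\<^sub>R x - p)"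
    unfolding y_p using \<open>0 < norm (x - p)\<close> assms(4) by (simp add: t_def)
qed

lemma strongly_exposes_gap:
  assumes "strongly_exposes f A e" "0 < r"
  obtains \<eta> where "0 < \<eta>" "\<forall>a\<in>A. r \<le> norm (a - e) \<longrightarrow> f a \<le> f e - \<eta>"
proof -
  have se: "\<forall>a\<in>A. f a \<le> f e" "\<forall>xs. (\<forall>n. xs n \<in> A) \<longrightarrow> (\<lambda>n. f (xs n)) \<longlonglongrightarrow> f e \<longrightarrow> xs \<longlonglongrightarrow> e"
    using assms(1) by (simp_all add: strongly_exposes_def)
  have "\<exists>\<eta>>0. \<forall>a\<in>A. r \<le> norm (a - e) \<longrightarrow> f a \<le> f e - \<eta>"
  proof (rule ccontr)
    assume no_gap: "\<not> ?thesis"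
    have "\<exists>a\<in>A. r \<le> norm (a - e) \<and> \<not> f a \<le> f e - 1 / Suc k" for k
    proof -
      have "0 < 1 / real (Suc k)"
        by simp
      then show ?thesis
        using no_gap by blast
    qed
    then obtain xs where xs: "\<And>k. xs k \<in> A" "\<And>k. r \<le> norm (xs k - e)"
      "\<And>k. f e - 1 / Suc k < f (xs k)"
      unfolding not_le by metis
    have lim: "(\<lambda>k. f e - 1 / Suc k) \<longlonglongrightarrow> f e"
      using LIMSEQ_inverse_real_of_nat_add_minus[of "f e"] by (simp add: inverse_eq_divide add.commute)
    have lower: "eventually (\<lambda>k. f e - 1 / Suc k \<le> f (xs k)) sequentially"
      using xs(3) by (simp add: less_imp_le)
    have upper: "eventually (\<lambda>k. f (xs k) \<le> f e) sequentially"
      using se(1) xs(1) by simp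
    have "(\<lambda>k. f (xs k)) \<longlonglongrightarrow> f e"
      using real_tendsto_sandwich[OF lower upper lim tendsto_const] .
    then have "xs \<longlonglongrightarrow> e"
      using se(2) xs(1) by simp
    then have "eventually (\<lambda>k. dist (xs k) e < r) sequentially"
      using assms(2) by (rule tendstoD)
    then obtain N where "\<forall>k\<ge>N. dist (xs k) e < r"
      unfolding eventually_sequentially by blast
    then have "dist (xs N) e < r"
      by simp
    then show False
      using xs(2)[of N] by (simp add: dist_norm)
  qed
  then show ?thesis
    using that by blast
qed

lemma strongly_exposes_cone_bound:
  assumes "strongly_exposes f A e" "convex A" "0 < r"
  obtains \<kappa> where "0 < \<kappa>" "\<kappa> \<le> 1" "\<forall>a\<in>A. f a + \<kappa> * norm (a - e) \<le> f e + \<kappa> * r"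
proof -
  obtain \<eta> where \<eta>: "0 < \<eta>" "\<forall>a\<in>A. r \<le> norm (a - e) \<longrightarrow> f a \<le> f e - \<eta>"
    using strongly_exposes_gap[OF assms(1,3)] by blast
  define \<kappa> where "\<kappa> = min \<eta> r / r"
  have \<kappa>: "0 < \<kappa>" "\<kappa> \<le> 1" "\<kappa> * r \<le> \<eta>"
    using \<eta>(1) assms(3) by (auto simp: \<kappa>_def)
  have f: "linear f" "e \<in> A" "\<forall>a\<in>A. f a \<le> f e"
    using assms(1) by (auto simp: strongly_exposes_def bounded_linear.linear)
  have "f a + \<kappa> * norm (a - e) \<le> f e + \<kappa> * r" if a: "a \<in> A" for a
  proof (cases "norm (a - e) < r")
    case True
    then show ?thesis
      using f(3) a \<kappa>(1) by (smt (verit) mult_strict_left_mono)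
  next
    case False
    then obtain y where y: "y \<in> A" "norm (y - e) = r" "a - e = (norm (a - e) / r) *\<^sub>R (y - e)"
      using convex_point_at_distance[OF assms(2) f(2) a assms(3)] by auto
    have "f (y - e) \<le> - (\<kappa> * r)"
      using \<eta>(2) y(1,2) \<kappa>(3) linear_diff[OF f(1)] by force
    then have "(norm (a - e) / r) * f (y - e) \<le> (norm (a - e) / r) * - (\<kappa> * r)"
      using assms(3) by (intro mult_left_mono) auto
    also have "\<dots> = - (\<kappa> * norm (a - e))"
      using assms(3) by simp
    finally have "(norm (a - e) / r) * f (y - e) \<le> - (\<kappa> * norm (a - e))" .
    moreover have "f (a - e) = (norm (a - e) / r) * f (y - e)"
      by (subst y(3)) (simp add: linear_scale[OF f(1)])
    ultimately show ?thesis
      using linear_diff[OF f(1), of a e] mult_pos_pos[OF \<kappa>(1) assms(3)] by linarith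
  qed
  then show ?thesis
    using that \<kappa> by blast
qed

lemma convex_cone_bound_extends:
  assumes "convex K" "p \<in> K" "linear L" "0 < \<rho>" "0 \<le> M"
    and near: "\<forall>y\<in>K. norm (y - p) \<le> \<rho> \<longrightarrow> L (y - p) + k * norm (y - p) \<le> M"
    and "x \<in> K"
  shows "L (x - p) + k * norm (x - p) \<le> M * (1 + norm (x - p) / \<rho>)"
proof (cases "norm (x - p) \<le> \<rho>")
  case True
  then show ?thesis
    using near assms(4,5,7) by (smt (verit) divide_nonneg_pos mult_le_cancel_left1 norm_ge_zero)
next
  case False
  define s where "s = norm (x - p) / \<rho>"
  obtain y where y: "y \<in> K" "norm (y - p) = \<rho>" "x - p = s *\<^sub>R (y - p)"
    using convex_point_at_distance[OF assms(1,2,7,4)] False by (auto simp: s_def)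
  have "0 \<le> s"
    using assms(4) by (simp add: s_def)
  have "L (x - p) = s * L (y - p)"
    unfolding y(3) by (simp add: linear_scale[OF assms(3)])
  then have "L (x - p) + k * norm (x - p) = s * (L (y - p) + k * norm (y - p))"
    using y(2) assms(4) by (simp add: s_def algebra_simps)
  also have "\<dots> \<le> s * M"
    using near y(1,2) \<open>0 \<le> s\<close> by (intro mult_left_mono) auto
  also have "\<dots> \<le> M * (1 + s)"
    using assms(5) by (simp add: algebra_simps)
  finally show ?thesis
    by (simp add: s_def)
qed

lemma linear_le_add_norm:
  assumes "linear L" "\<forall>u. \<bar>L u\<bar> \<le> norm u"
  shows "L x \<le> L y + norm (x - y)"
  using assms(2) linear_diff[OF assms(1), of x y] by (smt (verit))

lemma cone_bound_transfer:
  assumes L: "linear L" "\<forall>u. \<bar>L u\<bar> \<le> norm u" and k: "0 \<le> k" "k \<le> 1"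
    and "L z + k * norm (z - c) \<le> L c + \<mu>" "dist y z \<le> \<delta>" "dist c q \<le> \<delta>"
  shows "L (y - q) + k * norm (y - q) \<le> \<mu> + 4 * \<delta>"
proof -
  have "norm (y - q) \<le> norm (z - c) + norm ((y - z) + (c - q))"
    using norm_triangle_ineq[of "z - c" "(y - z) + (c - q)"] by simp
  also have "\<dots> \<le> norm (z - c) + 2 * \<delta>"
    using norm_triangle_ineq[of "y - z" "c - q"] assms(6,7) by (simp add: dist_norm)
  finally have "k * norm (y - q) \<le> k * norm (z - c) + k * (2 * \<delta>)"
    using k(1) by (simp add: mult_left_mono flip: distrib_left)
  moreover have "0 \<le> \<delta>"
    using assms(7) zero_le_dist[of c q] by linarith
  then have "k * (2 * \<delta>) \<le> 2 * \<delta>"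
    using k by (intro mult_left_le_one_le) auto
  moreover have "L y \<le> L z + \<delta>" "L c \<le> L q + \<delta>"
    using linear_le_add_norm[OF L, of y z] linear_le_add_norm[OF L, of c q] assms(6,7)
    by (simp_all add: dist_norm)
  ultimately show ?thesis
    using assms(5) linear_diff[OF L(1), of y q] by linarith
qed

lemma cone_bound_recenter:
  assumes L: "linear L" "\<forall>u. \<bar>L u\<bar> \<le> norm u" and k: "0 \<le> k" "k \<le> 1"
    and "0 < \<rho>" "0 \<le> M" "dist c q \<le> \<delta>"
    and bound: "L (x - q) + k * norm (x - q) \<le> M * (1 + norm (x - q) / \<rho>)"
  shows "L (x - c) + k * norm (x - c) \<le> (M + 2 * \<delta> + M * \<delta> / \<rho>) * (1 + norm (x - c) / \<rho>)"
proof -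
  have "0 \<le> \<delta>"
    using assms(7) zero_le_dist[of c q] by linarith
  have "L (x - c) \<le> L (x - q) + \<delta>"
    using linear_le_add_norm[OF L, of q c] assms(7) linear_diff[OF L(1)]
    by (simp add: dist_norm norm_minus_commute)
  moreover have "norm (x - c) \<le> norm (x - q) + \<delta>" "norm (x - q) \<le> norm (x - c) + \<delta>"
    using norm_triangle_ineq[of "x - q" "q - c"] norm_triangle_ineq[of "x - c" "c - q"] assms(7)
    by (simp_all add: dist_norm norm_minus_commute)
  moreover have "k * norm (x - c) \<le> k * norm (x - q) + \<delta>"
    using mult_left_mono[OF \<open>norm (x - c) \<le> norm (x - q) + \<delta>\<close> k(1)]
      mult_left_le_one_le[OF \<open>0 \<le> \<delta>\<close> k]
    by (simp add: distrib_left)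
  moreover have "M * norm (x - q) / \<rho> \<le> M * norm (x - c) / \<rho> + M * \<delta> / \<rho>"
    using mult_left_mono[OF \<open>norm (x - q) \<le> norm (x - c) + \<delta>\<close> \<open>0 \<le> M\<close>] \<open>0 < \<rho>\<close>
    by (simp add: distrib_left divide_right_mono flip: add_divide_distrib)
  moreover have "0 \<le> (2 * \<delta> + M * \<delta> / \<rho>) * (norm (x - c) / \<rho>)"
    using \<open>0 \<le> \<delta>\<close> \<open>0 \<le> M\<close> \<open>0 < \<rho>\<close> by simp
  ultimately show ?thesis
    using bound by (simp add: algebra_simps)
qed

lemma aw_converges_local_cone_bound:
  fixes C :: "'a::real_normed_vector set"
  assumes aw: "aw_converges Cs C" and Cs: "\<forall>n. Cs n \<noteq> {}" and c: "c \<in> C"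
    and L: "linear L" "\<forall>u. \<bar>L u\<bar> \<le> norm u" and k: "0 \<le> k" "k \<le> 1"
    and bound: "\<forall>z\<in>C. L z + k * norm (z - c) \<le> L c + \<mu>" and "0 < \<delta>"
  shows "eventually (\<lambda>n. \<exists>q\<in>Cs n. dist c q < \<delta> \<and>
           (\<forall>y\<in>Cs n. norm (y - q) \<le> \<rho> \<longrightarrow> L (y - q) + k * norm (y - q) \<le> \<mu> + 4 * \<delta>)) sequentially"
proof -
  have "C \<noteq> {}"
    using c by blast
  have "eventually (\<lambda>n. infdist c (Cs n) < \<delta>) sequentially"
    using aw_converges_infdist_point[OF aw Cs c \<open>0 < \<delta>\<close>] .
  moreover have "eventually (\<lambda>n. \<forall>y\<in>Cs n. norm y \<le> norm c + \<delta> + \<rho> \<longrightarrow> infdist y C < \<delta>) sequentially"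
    using aw_converges_infdist_bounded[OF aw \<open>C \<noteq> {}\<close> \<open>0 < \<delta>\<close>] .
  ultimately show ?thesis
  proof eventually_elim
    case (elim n)
    have "Cs n \<noteq> {}"
      using Cs by blast
    then obtain q where q: "q \<in> Cs n" "dist c q < \<delta>"
      using elim(1) infdist_less_iff by blast
    have "L (y - q) + k * norm (y - q) \<le> \<mu> + 4 * \<delta>" if y: "y \<in> Cs n" "norm (y - q) \<le> \<rho>" for y
    proof -
      have "norm y \<le> norm c + norm (q - c) + norm (y - q)"
        using norm_triangle_ineq[of c "q - c"] norm_triangle_ineq[of q "y - q"] by simp
      then have "infdist y C < \<delta>"
        using elim(2) y q(2) by (simp add: dist_norm norm_minus_commute)
      then obtain z where "z \<in> C" "dist y z < \<delta>"
        using infdist_less_iff[OF \<open>C \<noteq> {}\<close>] by blast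
      then show ?thesis
        using cone_bound_transfer[OF L k _ _ less_imp_le[OF q(2)]] bound by force
    qed
    then show ?case
      using q by blast
  qed
qed

lemma aw_converges_cone_bound:
  fixes C :: "'a::real_normed_vector set"
  assumes aw: "aw_converges Cs C" and Cs: "\<forall>n. convex (Cs n) \<and> Cs n \<noteq> {}" and c: "c \<in> C"
    and L: "linear L" "\<forall>u. \<bar>L u\<bar> \<le> norm u" and k: "0 \<le> k" "k \<le> 1"
    and bound: "\<forall>z\<in>C. L z + k * norm (z - c) \<le> L c + \<mu>" and "0 < \<epsilon>" "0 < \<rho>"
  shows "eventually (\<lambda>n. \<forall>x\<in>Cs n.
           L x + k * norm (x - c) \<le> L c + (\<mu> + \<epsilon>) * (1 + norm (x - c) / \<rho>)) sequentially"
proof -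
  have "0 \<le> \<mu>"
    using bound c by force
  have "((\<lambda>\<delta>. (\<mu> + 4 * \<delta>) + 2 * \<delta> + (\<mu> + 4 * \<delta>) * \<delta> / \<rho>) \<longlongrightarrow> \<mu>) (at_right 0)"
    using \<open>0 < \<rho>\<close> by (auto intro!: tendsto_eq_intros)
  moreover have "\<mu> < \<mu> + \<epsilon>"
    using \<open>0 < \<epsilon>\<close> by simp
  ultimately have "eventually (\<lambda>\<delta>. (\<mu> + 4 * \<delta>) + 2 * \<delta> + (\<mu> + 4 * \<delta>) * \<delta> / \<rho> < \<mu> + \<epsilon>) (at_right 0)"
    by (rule order_tendstoD(2))
  then obtain \<delta> where \<delta>: "0 < \<delta>" "(\<mu> + 4 * \<delta>) + 2 * \<delta> + (\<mu> + 4 * \<delta>) * \<delta> / \<rho> < \<mu> + \<epsilon>"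
    using eventually_happens[OF eventually_conj[OF eventually_at_right_less[of 0]]] by force
  have "\<forall>n. Cs n \<noteq> {}"
    using Cs by blast
  \<comment> \<open>The bound holds near a point \<open>q\<close> of \<open>Cs n\<close> close to \<open>c\<close>, extends to all of \<open>Cs n\<close>
    by convexity, and is then recentred at \<open>c\<close>.\<close>
  from aw_converges_local_cone_bound[OF aw this c L k bound \<delta>(1), of \<rho>] show ?thesis
  proof eventually_elim
    case (elim n)
    then obtain q where q: "q \<in> Cs n" "dist c q < \<delta>"
      "\<forall>y\<in>Cs n. norm (y - q) \<le> \<rho> \<longrightarrow> L (y - q) + k * norm (y - q) \<le> \<mu> + 4 * \<delta>"
      by blast
    have "0 \<le> \<mu> + 4 * \<delta>"
      using \<open>0 \<le> \<mu>\<close> \<delta>(1) by simp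
    show ?case
    proof
      fix x
      assume x: "x \<in> Cs n"
      have "L (x - q) + k * norm (x - q) \<le> (\<mu> + 4 * \<delta>) * (1 + norm (x - q) / \<rho>)"
        using convex_cone_bound_extends[OF _ q(1) L(1) \<open>0 < \<rho>\<close> \<open>0 \<le> \<mu> + 4 * \<delta>\<close> q(3) x] Cs by simp
      then have "L (x - c) + k * norm (x - c)
          \<le> ((\<mu> + 4 * \<delta>) + 2 * \<delta> + (\<mu> + 4 * \<delta>) * \<delta> / \<rho>) * (1 + norm (x - c) / \<rho>)"
        using cone_bound_recenter[OF L k \<open>0 < \<rho>\<close> \<open>0 \<le> \<mu> + 4 * \<delta>\<close> less_imp_le[OF q(2)]] by blast
      also have "\<dots> \<le> (\<mu> + \<epsilon>) * (1 + norm (x - c) / \<rho>)"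
        using \<delta>(2) \<open>0 < \<rho>\<close> by (intro mult_right_mono) auto
      finally show "L x + k * norm (x - c) \<le> L c + (\<mu> + \<epsilon>) * (1 + norm (x - c) / \<rho>)"
        using linear_diff[OF L(1), of x c] by simp
    qed
  qed
qed

section \<open>One step of the perturbed alternating projections\<close>

lemma pythagoras_leg_shrink:
  fixes \<beta> G D \<kappa> :: real
  assumes "\<beta>\<^sup>2 + G\<^sup>2 \<le> D\<^sup>2" "\<kappa> * D / 8 \<le> G" "0 \<le> D" "0 \<le> \<kappa>" "\<kappa> \<le> 1"
  shows "\<beta> \<le> (1 - \<kappa>\<^sup>2 / 128) * D"
proof (rule power2_le_imp_le)
  have "(\<kappa> * D / 8)\<^sup>2 \<le> G\<^sup>2"
    using assms(2-4) by (intro power_mono) auto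
  moreover have "((1 - \<kappa>\<^sup>2 / 128) * D)\<^sup>2 = D\<^sup>2 - (\<kappa> * D / 8)\<^sup>2 + (\<kappa>\<^sup>2 / 128 * D)\<^sup>2"
    by (simp add: power2_eq_square algebra_simps)
  ultimately show "\<beta>\<^sup>2 \<le> ((1 - \<kappa>\<^sup>2 / 128) * D)\<^sup>2"
    using assms(1) zero_le_power2[of "\<kappa>\<^sup>2 / 128 * D"] by linarith
  show "0 \<le> (1 - \<kappa>\<^sup>2 / 128) * D"
    using power_le_one[of \<kappa> 2] assms(3-5) by (intro mult_nonneg_nonneg) auto
qed

text \<open>In the application \<open>D = |x - e|\<close>, \<open>\<beta> = |P x - P e|\<close> and
  \<open>G = |(x - P x) - (e - P e)|\<close> for the projection \<open>P\<close> onto the perturbed \<open>B\<close>.\<close>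

lemma alternating_step_arith:
  fixes D \<beta> G D' \<kappa> r \<epsilon> :: real
  assumes "0 \<le> D" "0 \<le> \<beta>" "\<beta>\<^sup>2 + G\<^sup>2 \<le> D\<^sup>2" "D' \<le> \<beta> + 2 * \<epsilon>"
    and G: "\<kappa> * D / 2 - 2 * \<kappa> * r - \<epsilon> * (1 + \<beta> + \<epsilon>) - \<epsilon> \<le> G"
    and \<kappa>: "0 < \<kappa>" "\<kappa> \<le> 1" and "0 < r"
    and \<epsilon>: "0 < \<epsilon>" "\<epsilon> \<le> \<kappa> / 4" "\<epsilon> \<le> \<kappa>\<^sup>2 * r / 16"
  shows "D' \<le> max (D - \<kappa>\<^sup>2 * r / 16) (25 * r)"
proof -
  have "\<beta>\<^sup>2 \<le> D\<^sup>2"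
    using assms(3) zero_le_power2[of G] by linarith
  then have "\<beta> \<le> D"
    using assms(1) by (rule power2_le_imp_le)
  have "\<kappa>\<^sup>2 * r \<le> \<kappa> * r" "0 \<le> \<kappa>\<^sup>2 * r"
    using \<kappa> \<open>0 < r\<close> by (simp_all add: power2_eq_square mult_left_le_one_le)
  have "\<epsilon> * \<epsilon> \<le> \<epsilon> / 4"
    using mult_left_mono[OF \<epsilon>(2), of \<epsilon>] \<epsilon>(1) \<kappa>(2) by simp
  have "\<epsilon> * \<beta> \<le> \<kappa> / 4 * D"
    using \<epsilon>(1,2) \<open>0 \<le> \<beta>\<close> \<open>\<beta> \<le> D\<close> by (intro mult_mono) auto
  have "\<kappa> / 4 * D - 3 * \<kappa> * r = \<kappa> * D / 2 - 2 * \<kappa> * r - \<kappa> / 4 * D - \<kappa> * r"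
    by (simp add: algebra_simps)
  also have "\<dots> \<le> \<kappa> * D / 2 - 2 * \<kappa> * r - \<epsilon> * \<beta> - 3 * \<epsilon> - \<epsilon> * \<epsilon>"
    using \<open>\<epsilon> * \<beta> \<le> \<kappa> / 4 * D\<close> \<open>\<epsilon> * \<epsilon> \<le> \<epsilon> / 4\<close> \<open>\<kappa>\<^sup>2 * r \<le> \<kappa> * r\<close>
      \<open>0 \<le> \<kappa>\<^sup>2 * r\<close> \<epsilon>(3) by linarith
  also have "\<dots> = \<kappa> * D / 2 - 2 * \<kappa> * r - \<epsilon> * (1 + \<beta> + \<epsilon>) - 2 * \<epsilon>"
    by (simp add: algebra_simps)
  finally have G': "\<kappa> / 4 * D - 3 * \<kappa> * r \<le> G"
    using G \<epsilon>(1) by linarith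
  show ?thesis
  proof (cases "D < 24 * r")
    case True
    have "\<kappa> * r \<le> r"
      using \<kappa>(2) \<open>0 < r\<close> by simp
    then have "D' \<le> 25 * r"
      using True assms(4) \<open>\<beta> \<le> D\<close> \<epsilon>(3) \<open>\<kappa>\<^sup>2 * r \<le> \<kappa> * r\<close> \<open>0 < r\<close> by linarith
    then show ?thesis
      by simp
  next
    case False
    then have "\<kappa> * (24 * r) \<le> \<kappa> * D"
      using \<kappa>(1) by (intro mult_left_mono) auto
    then have "\<kappa> * D / 8 \<le> G"
      using G' by (simp add: algebra_simps)
    then have "\<beta> \<le> (1 - \<kappa>\<^sup>2 / 128) * D"
      using pythagoras_leg_shrink[OF assms(3) _ assms(1)] \<kappa> by simp
    moreover have "(1 - \<kappa>\<^sup>2 / 128) * D = D - \<kappa>\<^sup>2 * D / 128"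
      by (simp add: algebra_simps)
    moreover have "\<kappa>\<^sup>2 * r * 24 \<le> \<kappa>\<^sup>2 * D"
      using False by (simp add: mult.assoc mult_left_mono)
    ultimately have "D' \<le> D - \<kappa>\<^sup>2 * r / 16"
      using assms(4) \<epsilon>(3) by linarith
    then show ?thesis
      by simp
  qed
qed

lemma alternating_projection_step:
  fixes x e w :: "'a::{real_inner,complete_space}"
  assumes A': "closed A'" "convex A'" "A' \<noteq> {}" and B': "closed B'" "convex B'" "B' \<noteq> {}"
    and f: "linear f" "\<forall>u. \<bar>f u\<bar> \<le> norm u"
    and fx: "f x + \<kappa> * norm (x - e) / 2 \<le> f e + 2 * \<kappa> * r"
    and fB: "\<forall>y\<in>B'. f w - \<epsilon> * (1 + norm (y - w)) \<le> f y"
    and PB: "norm (metric_proj B' e - w) \<le> \<epsilon>" and PA: "norm (metric_proj A' w - e) \<le> \<epsilon>"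
    and \<kappa>: "0 < \<kappa>" "\<kappa> \<le> 1" and "0 < r" and \<epsilon>: "0 < \<epsilon>" "\<epsilon> \<le> \<kappa> / 4" "\<epsilon> \<le> \<kappa>\<^sup>2 * r / 16"
  shows "norm (metric_proj A' (metric_proj B' x) - e) \<le> max (norm (x - e) - \<kappa>\<^sup>2 * r / 16) (25 * r)"
proof -
  define b where "b = metric_proj B' x"
  define p where "p = metric_proj B' e"
  have b_w: "norm (b - w) \<le> norm (b - p) + \<epsilon>"
    using norm_triangle_ineq[of "b - p" "p - w"] PB by (simp add: p_def)
  have "norm (metric_proj A' b - e) \<le> norm (metric_proj A' b - metric_proj A' w) + \<epsilon>"
    using norm_triangle_ineq[of "metric_proj A' b - metric_proj A' w" "metric_proj A' w - e"] PA by simp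
  also have "\<dots> \<le> norm (b - p) + 2 * \<epsilon>"
    using metric_proj_nonexpansive[OF A', of b w] b_w by simp
  finally have step: "norm (metric_proj A' b - e) \<le> norm (b - p) + 2 * \<epsilon>" .
  have "f b - f w - (f x - f e) = f ((b - w) - (x - e))"
    by (simp add: linear_diff[OF f(1)])
  also have "\<dots> \<le> norm ((x - e) - (b - w))"
    using f(2) by (metis abs_le_D1 norm_minus_commute)
  also have "\<dots> \<le> norm ((x - b) - (e - p)) + norm (p - w)"
    using norm_triangle_ineq4[of "(x - b) - (e - p)" "p - w"] by (simp add: algebra_simps)
  finally have "f b - f w - (f x - f e) - \<epsilon> \<le> norm ((x - b) - (e - p))"
    using PB by (simp add: p_def)
  moreover have "f w - \<epsilon> * (1 + norm (b - p) + \<epsilon>) \<le> f b"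
  proof -
    have "f w - \<epsilon> * (1 + norm (b - w)) \<le> f b"
      using fB metric_proj_in[OF B'] by (simp add: b_def)
    moreover have "\<epsilon> * (1 + norm (b - w)) \<le> \<epsilon> * (1 + norm (b - p) + \<epsilon>)"
      using b_w \<epsilon>(1) by (intro mult_left_mono) auto
    ultimately show ?thesis
      by linarith
  qed
  ultimately have "\<kappa> * norm (x - e) / 2 - 2 * \<kappa> * r - \<epsilon> * (1 + norm (b - p) + \<epsilon>) - \<epsilon>
      \<le> norm ((x - b) - (e - p))"
    using fx by linarith
  moreover have "(norm (b - p))\<^sup>2 + (norm ((x - b) - (e - p)))\<^sup>2 \<le> (norm (x - e))\<^sup>2"
    using metric_proj_firmly_nonexpansive[OF B', of x e] by (simp add: b_def p_def)
  ultimately show ?thesis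
    using alternating_step_arith[OF norm_ge_zero norm_ge_zero _ step _ \<kappa> \<open>0 < r\<close> \<epsilon>] by (simp add: b_def)
qed

lemma eventually_le_of_eventually_descent:
  fixes D :: "nat \<Rightarrow> real"
  assumes "0 < \<gamma>" "\<And>n. 0 \<le> D n" and descent: "eventually (\<lambda>n. D (Suc n) \<le> max (D n - \<gamma>) M) sequentially"
  shows "eventually (\<lambda>n. D n \<le> M) sequentially"
proof -
  obtain N where N: "\<And>n. N \<le> n \<Longrightarrow> D (Suc n) \<le> max (D n - \<gamma>) M"
    using descent by (auto simp: eventually_sequentially)
  have "\<exists>m\<ge>N. D m \<le> M"
  proof (rule ccontr)
    assume "\<not> ?thesis"
    then have above: "M < D m" if "N \<le> m" for m
      using that by force
    have decrease: "D (N + k) \<le> D N - real k * \<gamma>" for k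
    proof (induction k)
      case (Suc k)
      have "D (Suc (N + k)) \<le> D (N + k) - \<gamma>"
        using N[of "N + k"] above[of "Suc (N + k)"] by linarith
      then show ?case
        using Suc by (simp add: algebra_simps)
    qed simp
    obtain k :: nat where "D N / \<gamma> < real k"
      using reals_Archimedean2 by blast
    then have "D N < real k * \<gamma>"
      using assms(1) by (simp add: field_simps)
    then show False
      using assms(2)[of "N + k"] decrease[of k] by linarith
  qed
  then obtain m where m: "N \<le> m" "D m \<le> M"
    by blast
  have "D (m + k) \<le> M" for k
  proof (induction k)
    case (Suc k)
    then show ?case
      using N[of "m + k"] m(1) assms(1) by simp
  qed (use m in simp)
  then show ?thesis
    unfolding eventually_sequentially by (metis le_add_diff_inverse)
qed

section \<open>Convergence of the perturbed alternating projections\<close>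

context
  fixes A B :: "'a::{real_inner,complete_space} set" and As Bs :: "nat \<Rightarrow> 'a set"
    and f :: "'a \<Rightarrow> real" and e w :: 'a
  assumes A: "closed A" "convex A" "A \<noteq> {}" and B: "closed B" "convex B" "B \<noteq> {}"
    and As: "\<forall>n. closed (As n) \<and> convex (As n) \<and> As n \<noteq> {}"
    and Bs: "\<forall>n. closed (Bs n) \<and> convex (Bs n) \<and> Bs n \<noteq> {}"
    and aw: "aw_converges As A" "aw_converges Bs B"
    and exposes: "strongly_exposes f A e" and f_le_norm: "\<forall>u. \<bar>f u\<bar> \<le> norm u"
    and proj_e: "metric_proj B e = w" and proj_w: "metric_proj A w = e"
    and supports: "\<forall>b\<in>B. f w \<le> f b"
begin

lemma alt_a_in: "0 < n \<Longrightarrow> alt_a As Bs a0 n \<in> As n"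
  using As by (cases n) (auto intro: metric_proj_in)

lemma eventually_As_cone_bound:
  assumes "0 < \<kappa>" "\<kappa> \<le> 1" "0 < r"
    and cone: "\<forall>a\<in>A. f a + \<kappa> * norm (a - e) \<le> f e + \<kappa> * r"
  shows "eventually (\<lambda>n. \<forall>x\<in>As n. f x + \<kappa> * norm (x - e) / 2 \<le> f e + 2 * \<kappa> * r) sequentially"
proof -
  have f: "bounded_linear f" "e \<in> A"
    using exposes by (simp_all add: strongly_exposes_def)
  have slope: "(\<kappa> * r + \<kappa> * r) * (1 + t / (4 * r)) = 2 * \<kappa> * r + \<kappa> * t / 2" for t
    using \<open>0 < r\<close> by (simp add: field_simps)
  have "eventually (\<lambda>n. \<forall>x\<in>As n.
      f x + \<kappa> * norm (x - e) \<le> f e + (\<kappa> * r + \<kappa> * r) * (1 + norm (x - e) / (4 * r))) sequentially"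
    using As cone assms(1-3)
    by (intro aw_converges_cone_bound[OF aw(1) _ f(2) bounded_linear.linear[OF f(1)] f_le_norm]) auto
  then show ?thesis
  proof eventually_elim
    case (elim n)
    show ?case
    proof
      fix x
      assume "x \<in> As n"
      then have "f x + \<kappa> * norm (x - e) \<le> f e + (2 * \<kappa> * r + \<kappa> * norm (x - e) / 2)"
        using elim unfolding slope by blast
      then show "f x + \<kappa> * norm (x - e) / 2 \<le> f e + 2 * \<kappa> * r"
        by linarith
    qed
  qed
qed

lemma eventually_Bs_support:
  assumes "0 < \<epsilon>"
  shows "eventually (\<lambda>n. \<forall>y\<in>Bs n. f w - \<epsilon> * (1 + norm (y - w)) \<le> f y) sequentially"
proof -
  have "bounded_linear f"
    using exposes by (simp add: strongly_exposes_def)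
  moreover have "w \<in> B"
    using metric_proj_in[OF B, of e] proj_e by simp
  ultimately have "eventually (\<lambda>n. \<forall>y\<in>Bs n.
      - f y + 0 * norm (y - w) \<le> - f w + (0 + \<epsilon>) * (1 + norm (y - w) / 1)) sequentially"
    using Bs supports f_le_norm assms
    by (intro aw_converges_cone_bound[OF aw(2) _ _ bounded_linear.linear[OF bounded_linear_minus]]) auto
  then show ?thesis
    by (simp add: algebra_simps)
qed

lemma eventually_metric_proj_near:
  assumes "0 < \<epsilon>"
  shows "eventually (\<lambda>n. norm (metric_proj (Bs n) e - w) \<le> \<epsilon> \<and> norm (metric_proj (As n) w - e) \<le> \<epsilon>)
    sequentially"
  using tendstoD[OF metric_proj_aw_tendsto[OF aw(2) B Bs, of e] assms]
    tendstoD[OF metric_proj_aw_tendsto[OF aw(1) A As, of w] assms]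
  by eventually_elim (simp add: proj_e proj_w dist_norm)

lemma eventually_alt_a_step:
  assumes \<kappa>: "0 < \<kappa>" "\<kappa> \<le> 1" and "0 < r"
    and cone: "\<forall>a\<in>A. f a + \<kappa> * norm (a - e) \<le> f e + \<kappa> * r"
  shows "eventually (\<lambda>n. norm (alt_a As Bs a0 (Suc n) - e)
           \<le> max (norm (alt_a As Bs a0 n - e) - \<kappa>\<^sup>2 * r / 16) (25 * r)) sequentially"
proof -
  define \<epsilon> where "\<epsilon> = min (\<kappa> / 4) (\<kappa>\<^sup>2 * r / 16)"
  have \<epsilon>: "0 < \<epsilon>" "\<epsilon> \<le> \<kappa> / 4" "\<epsilon> \<le> \<kappa>\<^sup>2 * r / 16"
    using \<kappa> \<open>0 < r\<close> unfolding \<epsilon>_def by simp_all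
  have "linear f"
    using exposes by (simp add: strongly_exposes_def bounded_linear.linear)
  have "eventually (\<lambda>n. (\<forall>y\<in>Bs (Suc n). f w - \<epsilon> * (1 + norm (y - w)) \<le> f y)
      \<and> norm (metric_proj (Bs (Suc n)) e - w) \<le> \<epsilon> \<and> norm (metric_proj (As (Suc n)) w - e) \<le> \<epsilon>) sequentially"
    using eventually_conj[OF eventually_Bs_support eventually_metric_proj_near, OF \<epsilon>(1) \<epsilon>(1)]
    by (subst eventually_sequentially_Suc)
  with eventually_As_cone_bound[OF \<kappa> \<open>0 < r\<close> cone] eventually_gt_at_top[of 0] show ?thesis
  proof eventually_elim
    case (elim n)
    have fx: "f (alt_a As Bs a0 n) + \<kappa> * norm (alt_a As Bs a0 n - e) / 2 \<le> f e + 2 * \<kappa> * r"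
      using elim(1) alt_a_in[OF elim(2)] by blast
    have An: "closed (As (Suc n))" "convex (As (Suc n))" "As (Suc n) \<noteq> {}"
      using As by auto
    have Bn: "closed (Bs (Suc n))" "convex (Bs (Suc n))" "Bs (Suc n) \<noteq> {}"
      using Bs by auto
    from elim(3) have fB: "\<forall>y\<in>Bs (Suc n). f w - \<epsilon> * (1 + norm (y - w)) \<le> f y"
      and PB: "norm (metric_proj (Bs (Suc n)) e - w) \<le> \<epsilon>"
      and PA: "norm (metric_proj (As (Suc n)) w - e) \<le> \<epsilon>"
      by simp_all
    show ?case
      using alternating_projection_step[OF An Bn \<open>linear f\<close> f_le_norm fx fB PB PA \<kappa> \<open>0 < r\<close> \<epsilon>]
      by simp
  qed
qed

lemma alt_a_tendsto: "alt_a As Bs a0 \<longlonglongrightarrow> e"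
proof (rule tendstoI)
  fix \<delta> :: real
  assume "0 < \<delta>"
  define r where "r = \<delta> / 50"
  have "0 < r"
    using \<open>0 < \<delta>\<close> by (simp add: r_def)
  obtain \<kappa> where \<kappa>: "0 < \<kappa>" "\<kappa> \<le> 1" "\<forall>a\<in>A. f a + \<kappa> * norm (a - e) \<le> f e + \<kappa> * r"
    using strongly_exposes_cone_bound[OF exposes A(2) \<open>0 < r\<close>] by blast
  have "eventually (\<lambda>n. norm (alt_a As Bs a0 n - e) \<le> 25 * r) sequentially"
    using \<kappa>(1) \<open>0 < r\<close>
    by (intro eventually_le_of_eventually_descent[OF _ _ eventually_alt_a_step[OF \<kappa>(1,2) \<open>0 < r\<close> \<kappa>(3)]]) auto
  then show "eventually (\<lambda>n. dist (alt_a As Bs a0 n) e < \<delta>) sequentially"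
    by eventually_elim (use \<open>0 < \<delta>\<close> in \<open>simp add: r_def dist_norm\<close>)
qed

lemma alt_b_tendsto: "alt_b As Bs a0 \<longlonglongrightarrow> w"
proof -
  have bound: "norm (alt_b As Bs a0 n - w)
      \<le> norm (alt_a As Bs a0 n - e) + norm (metric_proj (Bs (Suc n)) e - w)" for n
    using metric_proj_nonexpansive[of "Bs (Suc n)" "alt_a As Bs a0 n" e] Bs
      norm_triangle_ineq[of "alt_b As Bs a0 n - metric_proj (Bs (Suc n)) e" "metric_proj (Bs (Suc n)) e - w"]
    by (simp add: alt_b_def)
  have "(\<lambda>n. norm (alt_a As Bs a0 n - e) + norm (metric_proj (Bs (Suc n)) e - w)) \<longlonglongrightarrow> 0"
    using tendsto_add[OF tendsto_norm_zero[OF LIM_zero[OF alt_a_tendsto]]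
        tendsto_norm_zero[OF LIM_zero[OF LIMSEQ_Suc[OF metric_proj_aw_tendsto[OF aw(2) B Bs, of e]]]]]
    by (simp add: proj_e)
  then have "(\<lambda>n. alt_b As Bs a0 n - w) \<longlonglongrightarrow> 0"
    by (rule Lim_null_comparison[OF always_eventually, OF allI, OF bound])
  then show ?thesis
    by (rule LIM_zero_cancel)
qed

end

section \<open>The displacement vector\<close>

lemma norm_displacement_le:
  fixes A B :: "'a::{real_inner,complete_space} set"
  assumes "convex A" "convex B" "a \<in> A" "b \<in> B"
  shows "norm (displacement A B) \<le> norm (b - a)"
proof -
  define S where "S = {b - a | a b. a \<in> A \<and> b \<in> B}"
  have "S = (\<Union>b\<in>B. \<Union>a\<in>A. {b - a})"
    by (auto simp: S_def)
  then have "convex S"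
    using convex_differences[OF assms(2,1)] by simp
  moreover have "b - a \<in> S"
    using assms(3,4) by (auto simp: S_def)
  ultimately show ?thesis
    using metric_proj_le[of "closure S" "b - a" 0] closure_subset[of S]
    by (auto simp: displacement_def S_def[symmetric] convex_closure)
qed

context
  fixes A B :: "'a::{real_inner,complete_space} set" and e :: 'a
  assumes A: "closed A" "convex A" and B: "closed B" "convex B"
    and e: "e \<in> A" "e + displacement A B \<in> B"
begin

lemma metric_proj_displacement:
  "metric_proj B e = e + displacement A B" "metric_proj A (e + displacement A B) = e"
  using norm_displacement_le[OF A(2) B(2) e(1)] norm_displacement_le[OF A(2) B(2) _ e(2)] e
  by (auto intro!: metric_proj_eqI simp: A B dist_norm norm_minus_commute)

lemma best_approximation_points: "e \<in> best_A A B" "e + displacement A B \<in> best_B A B"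
proof -
  define d where "d = norm (displacement A B)"
  have "A \<noteq> {}" "B \<noteq> {}"
    using e by blast+
  have dist_A_B: "d \<le> infdist a B" if "a \<in> A" for a
    unfolding infdist_notempty[OF \<open>B \<noteq> {}\<close>] d_def
    using \<open>B \<noteq> {}\<close> norm_displacement_le[OF A(2) B(2) that]
    by (intro cINF_greatest) (auto simp: dist_norm norm_minus_commute)
  have "infdist e B = d"
    using dist_A_B[OF e(1)] infdist_le[OF e(2), of e] by (simp add: d_def dist_norm)
  moreover have "setdist_inf A B = d"
    unfolding setdist_inf_def
  proof (rule antisym)
    show "(INF a\<in>A. infdist a B) \<le> d"
      using \<open>infdist e B = d\<close> e(1) by (intro cINF_lower2[where x = e]) (auto intro: bdd_belowI2 infdist_nonneg)
    show "d \<le> (INF a\<in>A. infdist a B)"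
      using \<open>A \<noteq> {}\<close> dist_A_B by (intro cINF_greatest) auto
  qed
  moreover have "d \<le> infdist (e + displacement A B) A"
    unfolding infdist_notempty[OF \<open>A \<noteq> {}\<close>] d_def
    using \<open>A \<noteq> {}\<close> norm_displacement_le[OF A(2) B(2) _ e(2)]
    by (intro cINF_greatest) (auto simp: dist_norm)
  then have "infdist (e + displacement A B) A = d"
    using infdist_le[OF e(1), of "e + displacement A B"] by (simp add: d_def dist_norm)
  ultimately show "e \<in> best_A A B" "e + displacement A B \<in> best_B A B"
    using e by (simp_all add: best_A_def best_B_def)
qed

end

theorem corollary4p16:
  fixes A B :: "'a::{real_inner,complete_space} set"
    and f :: "'a \<Rightarrow> real" and e :: 'a
  assumes "closed A" "convex A" "A \<noteq> {}"
    and "closed B" "convex B" "B \<noteq> {}"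
    and "e \<in> A" "e + displacement A B \<in> B"
    and "bounded_linear f" "onorm f = 1"
    and "\<forall>b\<in>B. f e \<le> f (b - displacement A B)"
    and "\<forall>a\<in>A. f a \<le> f e"
    and "strongly_exposes f A e"
  shows "stable_couple A B"
proof -
  define w where "w = e + displacement A B"
  have f_le_norm: "\<forall>u. \<bar>f u\<bar> \<le> norm u"
    using onorm[OF assms(9)] assms(10) by simp
  have supports: "\<forall>b\<in>B. f w \<le> f b"
  proof
    fix b
    assume "b \<in> B"
    then have "f e \<le> f (b - displacement A B)"
      using assms(11) by blast
    then show "f w \<le> f b"
      using bounded_linear.linear[OF assms(9)] by (simp add: w_def linear_add linear_diff)
  qed
  note proj = metric_proj_displacement[OF assms(1,2,4,5,7,8), folded w_def]
  note conv = alt_a_tendsto[OF assms(1-6) _ _ _ _ assms(13) f_le_norm proj supports]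
    alt_b_tendsto[OF assms(1-6) _ _ _ _ assms(13) f_le_norm proj supports]
  show ?thesis
    using best_approximation_points[OF assms(1,2,4,5,7,8)] conv
    unfolding stable_couple_def convergent_def by blast
qed

end
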